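(* The automorphism group $\Gamma(C)$ of the cyclic order relation $C$ on $\mathbb Q\times\mathbb Z$ consists exactly of the positive permutations belonging to $\Gamma(S)$, i.e. of all positive permutations of $\mathbb Q\times\mathbb Z$ that initiate a permutation of $\mathbb Q$ of rotation type.
   Context: $\mathbb Q\times\mathbb Z$ denotes the set $\mathbb Q\times\mathbb Z$ with the lexicographic order: $(r,z)<(r',z')$ iff $r<r'$, or $r=r'$ and $z<z'$. On $\mathbb Q\times\mathbb Z$: $C(a,b,c)\iff(a<b<c)\vee(b<c<a)\vee(c<a<b)$, $B(a,b,c)\iff(a<b<c)\vee(a>b>c)$, $S(a,b,c,d)\iff(B(a,b,c)\vee B(a,d,c))\wedge(B(b,a,d)\vee B(b,c,d))$; $\Gamma(R)$ is the group of permutations of $\mathbb Q\times\mathbb Z$ preserving $R$. A vertical is a set $\{r\}\times\mathbb Z$. A permutation $g$ is systemic if it maps every vertical onto a vertical; it initiates the permutation $h$ of $\mathbb Q$ with $g(\{a\}\times\mathbb Z)=\{h(a)\}\times\mathbb Z$. A systemic permutation is positive if it preserves the order on each vertical. A section of $\mathbb Q$ is a pair $\{I_1,I_2\}$ with $I_1\cup I_2=\mathbb Q$, $I_1\cap I_2=\emptyset$, and $a<b$ for all $a\in I_1,b\in I_2$ (one of them may be empty). A permutation $h$ of $\mathbb Q$ is of rotation type if for some section $\{I_1,I_2\}$, $h$ is increasing on $I_1$ and on $I_2$ and $h(a)>h(b)$ for all $a\in I_1$, $b\in I_2$. *)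

theory Defs
  imports Complex_Main
begin

type_synonym pt = "rat \<times> int"

definition lex_less :: "pt \<Rightarrow> pt \<Rightarrow> bool" where
  "lex_less p q \<longleftrightarrow> fst p < fst q \<or> (fst p = fst q \<and> snd p < snd q)"

definition relC :: "pt \<Rightarrow> pt \<Rightarrow> pt \<Rightarrow> bool" where
  "relC a b c \<longleftrightarrow> (lex_less a b \<and> lex_less b c) \<or> (lex_less b c \<and> lex_less c a)
                   \<or> (lex_less c a \<and> lex_less a b)"

definition relB :: "pt \<Rightarrow> pt \<Rightarrow> pt \<Rightarrow> bool" where
  "relB a b c \<longleftrightarrow> (lex_less a b \<and> lex_less b c) \<or> (lex_less b a \<and> lex_less c b)"

definition relS :: "pt \<Rightarrow> pt \<Rightarrow> pt \<Rightarrow> pt \<Rightarrow> bool" where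
  "relS a b c d \<longleftrightarrow> (relB a b c \<or> relB a d c) \<and> (relB b a d \<or> relB b c d)"

definition Gamma3 :: "(pt \<Rightarrow> pt \<Rightarrow> pt \<Rightarrow> bool) \<Rightarrow> (pt \<Rightarrow> pt) set" where
  "Gamma3 R = {g. bij g \<and> (\<forall>a b c. R a b c \<longleftrightarrow> R (g a) (g b) (g c))}"

definition Gamma4 :: "(pt \<Rightarrow> pt \<Rightarrow> pt \<Rightarrow> pt \<Rightarrow> bool) \<Rightarrow> (pt \<Rightarrow> pt) set" where
  "Gamma4 R = {g. bij g \<and> (\<forall>a b c d. R a b c d \<longleftrightarrow> R (g a) (g b) (g c) (g d))}"

definition vertical :: "rat \<Rightarrow> pt set" where
  "vertical r = {r} \<times> UNIV"

definition systemic :: "(pt \<Rightarrow> pt) \<Rightarrow> bool" where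
  "systemic g \<longleftrightarrow> bij g \<and> (\<forall>r. \<exists>r'. g ` vertical r = vertical r')"

definition initiates :: "(pt \<Rightarrow> pt) \<Rightarrow> (rat \<Rightarrow> rat) \<Rightarrow> bool" where
  "initiates g h \<longleftrightarrow> systemic g \<and> (\<forall>a. g ` vertical a = vertical (h a))"

definition positive :: "(pt \<Rightarrow> pt) \<Rightarrow> bool" where
  "positive g \<longleftrightarrow> systemic g \<and>
     (\<forall>p q. fst p = fst q \<longrightarrow> lex_less p q \<longrightarrow> lex_less (g p) (g q))"

definition is_section :: "rat set \<Rightarrow> rat set \<Rightarrow> bool" where
  "is_section I1 I2 \<longleftrightarrow> I1 \<union> I2 = UNIV \<and> I1 \<inter> I2 = {} \<and> (\<forall>a\<in>I1. \<forall>b\<in>I2. a < b)"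

definition rotation_type :: "(rat \<Rightarrow> rat) \<Rightarrow> bool" where
  "rotation_type h \<longleftrightarrow> bij h \<and> (\<exists>I1 I2. is_section I1 I2 \<and> strict_mono_on I1 h \<and>
     strict_mono_on I2 h \<and> (\<forall>a\<in>I1. \<forall>b\<in>I2. h a > h b))"

end

theory Submission
  imports Defs "HOL-Library.Product_Lexorder"
begin

text \<open>Two points of Q x Z with no point cyclically between them are a point and its successor on
  its vertical. An automorphism of C preserves this relation, hence shifts each vertical onto a vertical
  and is positive; the map h it induces on Q preserves the cyclic order of Q, and such a bijection is a
  rotation, cut where h starts to reverse the order. Conversely, pulled back along a positive map
  initiating a rotation, the order of Q x Z becomes the lexicographic order rotated at a cut, which has
  the same cyclic order.

  S(a, b, c, d) holds iff the four points are distinct and b, d lie on different arcs from a to c. So a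
  map preserving S keeps or reverses the orientation of a triple independently of which point is
  exchanged for a fourth one, hence uniformly; a positive map keeps the orientation of a triple on one
  vertical, so it keeps all orientations.\<close>

definition cyclic :: "'a::linorder \<Rightarrow> 'a \<Rightarrow> 'a \<Rightarrow> bool" where
  "cyclic a b c \<longleftrightarrow> (a < b \<and> b < c) \<or> (b < c \<and> c < a) \<or> (c < a \<and> a < b)"

definition between :: "'a::linorder \<Rightarrow> 'a \<Rightarrow> 'a \<Rightarrow> bool" where
  "between a b c \<longleftrightarrow> (a < b \<and> b < c) \<or> (b < a \<and> c < b)"

definition separated :: "'a::linorder \<Rightarrow> 'a \<Rightarrow> 'a \<Rightarrow> 'a \<Rightarrow> bool" where
  "separated a b c d \<longleftrightarrow> (between a b c \<or> between a d c) \<and> (between b a d \<or> between b c d)"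

definition down_closed :: "'a::order set \<Rightarrow> bool" where
  "down_closed A \<longleftrightarrow> (\<forall>x\<in>A. \<forall>y<x. y \<in> A)"

definition rotated_less :: "'a::order set \<Rightarrow> 'a \<Rightarrow> 'a \<Rightarrow> bool" where
  "rotated_less A x y \<longleftrightarrow> (x \<notin> A \<and> y \<in> A) \<or> ((x \<in> A \<longleftrightarrow> y \<in> A) \<and> x < y)"

lemma cyclic_imp_distinct: "cyclic a b c \<Longrightarrow> distinct [a, b, c]"
  unfolding cyclic_def by auto

lemma separated_iff_distinct_cyclic:
  "separated a b c d \<longleftrightarrow> distinct [a, b, c, d] \<and> (cyclic a b c \<noteq> cyclic a d c)"
  unfolding separated_def between_def cyclic_def
  by (cases a b rule: linorder_cases; cases a c rule: linorder_cases; cases a d rule: linorder_cases;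
      cases b c rule: linorder_cases; cases b d rule: linorder_cases; cases c d rule: linorder_cases;
      (simp add: less_imp_not_less less_imp_neq[symmetric] less_imp_neq; order?)?; auto)

lemma cyclic_rotated_less:
  assumes "down_closed A"
  shows "(rotated_less A a b \<and> rotated_less A b c) \<or> (rotated_less A b c \<and> rotated_less A c a)
           \<or> (rotated_less A c a \<and> rotated_less A a b) \<longleftrightarrow> cyclic a b c"
proof -
  have down: "\<And>x y. x \<in> A \<Longrightarrow> y < x \<Longrightarrow> y \<in> A"
    using assms unfolding down_closed_def by blast
  show ?thesis
    unfolding rotated_less_def cyclic_def
    by (cases "a \<in> A"; cases "b \<in> A"; cases "c \<in> A"; cases a b rule: linorder_cases;
        cases a c rule: linorder_cases; cases b c rule: linorder_cases) (auto dest: down)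
qed

lemma cyclic_map_iff:
  assumes "\<And>x y. f x < f y \<longleftrightarrow> R x y"
  shows "cyclic (f a) (f b) (f c) \<longleftrightarrow> (R a b \<and> R b c) \<or> (R b c \<and> R c a) \<or> (R c a \<and> R a b)"
  unfolding cyclic_def assms ..

lemma cyclic_preserving_imp_separation_preserving:
  assumes "inj f" and "\<And>a b c. cyclic a b c \<longleftrightarrow> cyclic (f a) (f b) (f c)"
  shows "separated a b c d \<longleftrightarrow> separated (f a) (f b) (f c) (f d)"
  by (simp add: separated_iff_distinct_cyclic inj_eq[OF assms(1)] assms(2)[symmetric])

definition keeps_orientation :: "('a::linorder \<Rightarrow> 'b::linorder) \<Rightarrow> 'a \<Rightarrow> 'a \<Rightarrow> 'a \<Rightarrow> bool" where
  "keeps_orientation f a b c \<longleftrightarrow> (cyclic a b c \<longleftrightarrow> cyclic (f a) (f b) (f c))"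

lemma keeps_orientation_rotate: "keeps_orientation f a b c \<longleftrightarrow> keeps_orientation f b c a"
  unfolding keeps_orientation_def cyclic_def by blast

lemma keeps_orientation_exchange:
  assumes "inj f" and "\<And>a b c d. separated a b c d \<longleftrightarrow> separated (f a) (f b) (f c) (f d)"
    and "distinct [a, b, c, d]"
  shows "keeps_orientation f a b c \<longleftrightarrow> keeps_orientation f a d c"
proof -
  have "distinct [f a, f b, f c, f d]"
    using assms(1,3) by (simp add: inj_eq)
  then show ?thesis
    using assms(2)[of a b c d] assms(3)
    unfolding keeps_orientation_def separated_iff_distinct_cyclic by auto
qed

text \<open>Replacing one point at a time moves any triple to any disjoint triple.\<close>
lemma keeps_orientation_transfer:
  assumes "inj f" and sep: "\<And>a b c d. separated a b c d \<longleftrightarrow> separated (f a) (f b) (f c) (f d)"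
    and "distinct [a, b, c]" and "distinct [p, q, r]" and "{a, b, c} \<inter> {p, q, r} = {}"
  shows "keeps_orientation f a b c \<longleftrightarrow> keeps_orientation f p q r"
proof -
  note exchange = keeps_orientation_exchange[OF assms(1) sep]
  have "keeps_orientation f a b c \<longleftrightarrow> keeps_orientation f a q c"
    using exchange[of a b c q] assms(3-5) by auto
  also have "\<dots> \<longleftrightarrow> keeps_orientation f q c a"
    by (rule keeps_orientation_rotate)
  also have "\<dots> \<longleftrightarrow> keeps_orientation f q r a"
    using exchange[of q c a r] assms(3-5) by auto
  also have "\<dots> \<longleftrightarrow> keeps_orientation f r a q"
    by (rule keeps_orientation_rotate)
  also have "\<dots> \<longleftrightarrow> keeps_orientation f r p q"
    using exchange[of r a q p] assms(3-5) by auto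
  also have "\<dots> \<longleftrightarrow> keeps_orientation f p q r"
    by (rule keeps_orientation_rotate)
  finally show ?thesis .
qed

text \<open>The witness is the set of points after which the order is reversed somewhere, i.e. the part of
  the line that has been rotated past the rest.\<close>
lemma cyclic_preserving_imp_rotated_order:
  fixes h :: "'a::linorder \<Rightarrow> 'b::linorder"
  assumes "inj h" and C: "\<And>x y z. x < y \<Longrightarrow> y < z \<Longrightarrow> cyclic (h x) (h y) (h z)"
  shows "\<exists>A. down_closed A \<and> (\<forall>x y. h x < h y \<longleftrightarrow> rotated_less A x y)"
proof -
  define A where "A = {x. \<exists>y>x. h y < h x}"
  have hne: "h x \<noteq> h y" if "x \<noteq> y" for x y
    using \<open>inj h\<close> that by (simp add: inj_eq)
  have descent: "h y < h x \<longleftrightarrow> x \<in> A \<and> y \<notin> A" if "x < y" for x y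
  proof
    assume yx: "h y < h x"
    have "\<not> h w < h y" if "y < w" for w
      using C[OF \<open>x < y\<close> that] yx unfolding cyclic_def by auto
    then show "x \<in> A \<and> y \<notin> A"
      using \<open>x < y\<close> yx unfolding A_def by auto
  next
    assume "x \<in> A \<and> y \<notin> A"
    then obtain z where "x < z" "h z < h x" and y: "\<And>w. y < w \<Longrightarrow> \<not> h w < h y"
      unfolding A_def by auto
    consider "z < y" | "z = y" | "y < z" by fastforce
    then show "h y < h x"
    proof cases
      case 1
      then show ?thesis
        using C[OF \<open>x < z\<close> 1] \<open>h z < h x\<close> unfolding cyclic_def by auto
    next
      case 3
      then show ?thesis
        using y[OF 3] hne[of z y] \<open>h z < h x\<close> by auto
    qed (use \<open>h z < h x\<close> in simp)
  qed
  have "down_closed A"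
    unfolding down_closed_def
  proof (intro ballI allI impI)
    fix x y assume "x \<in> A" "y < x"
    then obtain z where "x < z" "h z < h x"
      unfolding A_def by auto
    show "y \<in> A"
    proof (cases "h x < h y")
      case True
      then show ?thesis using \<open>y < x\<close> unfolding A_def by auto
    next
      case False
      then have "h y < h x"
        using hne[of y x] less_imp_neq[OF \<open>y < x\<close>] by (meson linorder_neqE)
      then have "h z < h y"
        using C[OF \<open>y < x\<close> \<open>x < z\<close>] \<open>h z < h x\<close> unfolding cyclic_def by auto
      then show ?thesis
        using less_trans[OF \<open>y < x\<close> \<open>x < z\<close>] unfolding A_def by auto
    qed
  qed
  moreover have "h x < h y \<longleftrightarrow> rotated_less A x y" for x y
  proof (cases x y rule: linorder_cases)
    case less
    then have "h x < h y \<longleftrightarrow> \<not> h y < h x"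
      using hne[of x y] by (metis less_imp_neq not_less_iff_gr_or_eq)
    then show ?thesis
      using descent[OF less] less unfolding rotated_less_def by auto
  next
    case greater
    then show ?thesis
      using descent[OF greater] unfolding rotated_less_def by auto
  qed (simp add: rotated_less_def)
  ultimately show ?thesis by blast
qed

lemma rotation_type_iff_rotated_order:
  "rotation_type h \<longleftrightarrow> bij h \<and> (\<exists>A. down_closed A \<and> (\<forall>x y. h x < h y \<longleftrightarrow> rotated_less A x y))"
proof
  assume "rotation_type h"
  then obtain I1 I2 where sec: "is_section I1 I2" and mono1: "strict_mono_on I1 h"
    and mono2: "strict_mono_on I2 h" and cross: "\<forall>a\<in>I1. \<forall>b\<in>I2. h b < h a" and "bij h"
    unfolding rotation_type_def by blast
  have I2: "I2 = - I1" and before: "\<And>a b. a \<in> I1 \<Longrightarrow> b \<notin> I1 \<Longrightarrow> a < b"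
    using sec unfolding is_section_def by auto
  have "down_closed I1"
    unfolding down_closed_def using before by (meson less_asym)
  moreover have "h x < h y \<longleftrightarrow> rotated_less I1 x y" for x y
  proof (cases "x \<in> I1 \<longleftrightarrow> y \<in> I1")
    case True
    then have "h x < h y \<longleftrightarrow> x < y"
      using strict_mono_on_less[OF mono1, of x y] strict_mono_on_less[OF mono2, of x y]
      unfolding I2 by blast
    then show ?thesis
      using True unfolding rotated_less_def by blast
  next
    case False
    then consider "x \<in> I1" "y \<notin> I1" | "x \<notin> I1" "y \<in> I1"
      by blast
    then show ?thesis
    proof cases
      case 1
      then have "h y < h x"
        using cross unfolding I2 by blast
      then show ?thesis
        using 1 unfolding rotated_less_def by (meson less_asym)
    next
      case 2
      then have "h x < h y"
        using cross unfolding I2 by blast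
      then show ?thesis
        using 2 unfolding rotated_less_def by blast
    qed
  qed
  ultimately show "bij h \<and> (\<exists>A. down_closed A \<and> (\<forall>x y. h x < h y \<longleftrightarrow> rotated_less A x y))"
    using \<open>bij h\<close> by blast
next
  assume "bij h \<and> (\<exists>A. down_closed A \<and> (\<forall>x y. h x < h y \<longleftrightarrow> rotated_less A x y))"
  then obtain A where "bij h" "down_closed A" and ord: "\<And>x y. h x < h y \<longleftrightarrow> rotated_less A x y"
    by blast
  have "a < b" if "a \<in> A" "b \<notin> A" for a b
    using that \<open>down_closed A\<close> unfolding down_closed_def by (metis linorder_neqE)
  then have "is_section A (- A)"
    unfolding is_section_def by auto
  moreover have "strict_mono_on A h" "strict_mono_on (- A) h"
    by (auto intro!: strict_mono_onI simp: ord rotated_less_def)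
  moreover have "\<forall>a\<in>A. \<forall>b\<in>- A. h b < h a"
    by (simp add: ord rotated_less_def)
  ultimately show "rotation_type h"
    unfolding rotation_type_def using \<open>bij h\<close> by blast
qed

lemma lex_less_iff_less: "lex_less p q \<longleftrightarrow> p < q"
  by (cases p; cases q) (auto simp: lex_less_def)

lemma relC_eq_cyclic: "relC = cyclic"
  by (simp add: fun_eq_iff relC_def cyclic_def lex_less_iff_less)

lemma relS_eq_separated: "relS = separated"
  by (simp add: fun_eq_iff relS_def relB_def separated_def between_def lex_less_iff_less)

lemma positive_iff: "positive g \<longleftrightarrow> systemic g \<and> (\<forall>p q. fst p = fst q \<longrightarrow> p < q \<longrightarrow> g p < g q)"
  unfolding positive_def lex_less_iff_less ..

lemma positive_imp_bij: "positive g \<Longrightarrow> bij g"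
  unfolding positive_def systemic_def by blast

lemma initiates_fst:
  assumes "initiates g h"
  shows "fst (g p) = h (fst p)"
proof -
  have "p \<in> vertical (fst p)"
    by (cases p) (simp add: vertical_def)
  then have "g p \<in> vertical (h (fst p))"
    using assms unfolding initiates_def by blast
  then show ?thesis
    by (auto simp: vertical_def)
qed

lemma less_pt_iff_fst_less: "fst p \<noteq> fst q \<Longrightarrow> p < q \<longleftrightarrow> fst p < fst q"
  for p q :: pt by (cases p; cases q) auto

text \<open>A point of a later vertical lies cyclically between q and p whenever q < p.\<close>
lemma cyclic_gap_iff:
  fixes p q :: pt
  shows "p \<noteq> q \<and> (\<forall>x. \<not> cyclic p x q) \<longleftrightarrow> q = (fst p, snd p + 1)"
proof
  assume gap: "p \<noteq> q \<and> (\<forall>x. \<not> cyclic p x q)"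
  have "\<not> q < p"
    using gap[THEN conjunct2, rule_format, of "(fst p + 1, 0)"] by (cases p) (auto simp: cyclic_def)
  with gap have "p < q" by auto
  then show "q = (fst p, snd p + 1)"
    using gap[THEN conjunct2, rule_format, of "(fst p, snd p + 1)"]
    by (cases p; cases q) (auto simp: cyclic_def)
qed (cases p; auto simp: cyclic_def)

lemma cyclic_automorphism_successor:
  fixes g :: "pt \<Rightarrow> pt"
  assumes "bij g" and C: "\<And>a b c. cyclic a b c \<longleftrightarrow> cyclic (g a) (g b) (g c)"
  shows "g (r, n + 1) = (fst (g (r, n)), snd (g (r, n)) + 1)"
proof -
  have "g (r, n) \<noteq> g (r, n + 1) \<and> (\<forall>x. \<not> cyclic (g (r, n)) x (g (r, n + 1)))"
  proof (intro conjI allI)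
    show "g (r, n) \<noteq> g (r, n + 1)"
      using bij_is_inj[OF \<open>bij g\<close>] by (simp add: inj_eq)
    fix x
    obtain y where "x = g y"
      using bij_is_surj[OF \<open>bij g\<close>] by (metis surjD)
    moreover have "\<not> cyclic (r, n) y (r, n + 1)"
      using cyclic_gap_iff[of "(r, n)" "(r, n + 1)"] by (metis fst_conv snd_conv)
    ultimately show "\<not> cyclic (g (r, n)) x (g (r, n + 1))"
      using C by blast
  qed
  then show ?thesis
    using cyclic_gap_iff by blast
qed

lemma cyclic_automorphism_shift:
  fixes g :: "pt \<Rightarrow> pt"
  assumes "bij g" and "\<And>a b c. cyclic a b c \<longleftrightarrow> cyclic (g a) (g b) (g c)"
  shows "g (r, n) = (fst (g (r, 0)), snd (g (r, 0)) + n)"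
proof (induction n rule: int_induct[where k = 0])
  case (step1 i)
  then show ?case
    using cyclic_automorphism_successor[OF assms, of r i] by simp
next
  case (step2 i)
  then show ?case
    using cyclic_automorphism_successor[OF assms, of r "i - 1"] by (simp add: prod_eq_iff)
qed simp

lemma vertical_shift_positive_initiates:
  fixes g :: "pt \<Rightarrow> pt"
  assumes "bij g" and shift: "\<And>r n. g (r, n) = (h r, s r + n)"
  shows "positive g" and "initiates g h" and "bij h"
proof -
  have image: "g ` vertical r = vertical (h r)" for r
  proof
    show "g ` vertical r \<subseteq> vertical (h r)"
      using shift by (auto simp: vertical_def)
    show "vertical (h r) \<subseteq> g ` vertical r"
    proof
      fix x assume "x \<in> vertical (h r)"
      then have "x = g (r, snd x - s r)"
        using shift by (cases x) (auto simp: vertical_def)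
      then show "x \<in> g ` vertical r"
        by (auto simp: vertical_def)
    qed
  qed
  then have "systemic g"
    using \<open>bij g\<close> unfolding systemic_def by blast
  then show "initiates g h"
    using image unfolding initiates_def by blast
  show "positive g"
    unfolding positive_iff using \<open>systemic g\<close> shift
    by (auto simp: less_prod_def prod_eq_iff simp del: prod.collapse)
  have "inj h"
  proof (rule injI)
    fix a b assume "h a = h b"
    then have "g (a, 0) = g (b, s a - s b)"
      using shift by simp
    then show "a = b"
      using bij_is_inj[OF \<open>bij g\<close>] by (simp add: inj_eq)
  qed
  moreover have "y \<in> range h" for y
  proof -
    obtain p where "g p = (y, 0)"
      using bij_is_surj[OF \<open>bij g\<close>] by (metis surjD)
    then have "h (fst p) = y"
      using shift[of "fst p" "snd p"] by simp
    then show ?thesis by blast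
  qed
  ultimately show "bij h"
    by (auto simp: bij_def)
qed

lemma cyclic_automorphism_positive_rotation:
  fixes g :: "pt \<Rightarrow> pt"
  assumes "bij g" and C: "\<And>a b c. cyclic a b c \<longleftrightarrow> cyclic (g a) (g b) (g c)"
  shows "positive g \<and> (\<exists>h. initiates g h \<and> rotation_type h)"
proof -
  define h where "h r = fst (g (r, 0))" for r
  define s where "s r = snd (g (r, 0))" for r
  have shift: "g (r, n) = (h r, s r + n)" for r n
    using cyclic_automorphism_shift[OF assms] unfolding h_def s_def .
  note shift_props = vertical_shift_positive_initiates[OF \<open>bij g\<close> shift]
  have "inj h"
    using shift_props(3) by (rule bij_is_inj)
  have "g (x, 0) < g (y, 0) \<longleftrightarrow> h x < h y" for x y
    by (auto simp: shift less_prod_def le_less inj_eq[OF \<open>inj h\<close>])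
  then have "cyclic (h x) (h y) (h z)" if "x < y" "y < z" for x y z
    using C[of "(x, 0)" "(y, 0)" "(z, 0)"] that by (simp add: cyclic_def)
  then have "\<exists>A. down_closed A \<and> (\<forall>x y. h x < h y \<longleftrightarrow> rotated_less A x y)"
    by (rule cyclic_preserving_imp_rotated_order[OF \<open>inj h\<close>])
  then have "rotation_type h"
    using shift_props(3) by (simp add: rotation_type_iff_rotated_order)
  then show ?thesis
    using shift_props(1,2) by blast
qed

lemma positive_rotation_preserves_cyclic:
  fixes g :: "pt \<Rightarrow> pt"
  assumes pos: "positive g" and "initiates g h" and "rotation_type h"
  shows "cyclic a b c \<longleftrightarrow> cyclic (g a) (g b) (g c)"
proof -
  obtain A where "bij h" "down_closed A" and h_ord: "\<And>x y. h x < h y \<longleftrightarrow> rotated_less A x y"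
    using \<open>rotation_type h\<close> unfolding rotation_type_iff_rotated_order by blast
  define B :: "pt set" where "B = fst -` A"
  have "down_closed B"
    using \<open>down_closed A\<close> unfolding down_closed_def B_def less_prod_def by (auto simp: le_less)
  have "g p < g q \<longleftrightarrow> rotated_less B p q" for p q
  proof (cases "fst p = fst q")
    case True
    then have "g p < g q \<longleftrightarrow> p < q"
      using pos unfolding positive_iff by (metis linorder_neqE less_asym)
    then show ?thesis
      using True unfolding rotated_less_def B_def by auto
  next
    case False
    then have "g p < g q \<longleftrightarrow> h (fst p) < h (fst q)"
      using less_pt_iff_fst_less[of "g p" "g q"] bij_is_inj[OF \<open>bij h\<close>]
      by (simp add: initiates_fst[OF \<open>initiates g h\<close>] inj_eq)
    then show ?thesis
      using less_pt_iff_fst_less[OF False] unfolding h_ord rotated_less_def B_def by simp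
  qed
  then have "cyclic (g a) (g b) (g c) \<longleftrightarrow> (rotated_less B a b \<and> rotated_less B b c)
      \<or> (rotated_less B b c \<and> rotated_less B c a) \<or> (rotated_less B c a \<and> rotated_less B a b)"
    by (rule cyclic_map_iff)
  also have "\<dots> \<longleftrightarrow> cyclic a b c"
    by (rule cyclic_rotated_less[OF \<open>down_closed B\<close>])
  finally show ?thesis
    by (rule sym)
qed

lemma positive_separation_preserving_preserves_cyclic:
  fixes g :: "pt \<Rightarrow> pt"
  assumes pos: "positive g" and sep: "\<And>a b c d. separated a b c d \<longleftrightarrow> separated (g a) (g b) (g c) (g d)"
  shows "cyclic a b c \<longleftrightarrow> cyclic (g a) (g b) (g c)"
proof (cases "distinct [a, b, c]")
  case False
  moreover have "inj g"
    using pos by (simp add: positive_imp_bij bij_is_inj)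
  ultimately have "\<not> distinct [g a, g b, g c]"
    by (simp add: inj_eq)
  then show ?thesis
    using False cyclic_imp_distinct by blast
next
  case True
  define t where "t = max (fst a) (max (fst b) (fst c)) + 1"
  define p q r where "p = (t, 0::int)" and "q = (t, 1::int)" and "r = (t, 2::int)"
  have "fst x < t" if "x \<in> {a, b, c}" for x
    using that unfolding t_def by auto
  then have "{a, b, c} \<inter> {p, q, r} = {}"
    unfolding p_def q_def r_def by fastforce
  moreover have "distinct [p, q, r]"
    unfolding p_def q_def r_def by simp
  moreover have "keeps_orientation g p q r"
  proof -
    have "g p < g q" "g q < g r"
      using pos unfolding positive_iff p_def q_def r_def by simp_all
    then show ?thesis
      unfolding keeps_orientation_def cyclic_def p_def q_def r_def by simp
  qed
  ultimately have "keeps_orientation g a b c"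
    using keeps_orientation_transfer[OF bij_is_inj[OF positive_imp_bij[OF pos]] sep True] by blast
  then show ?thesis
    unfolding keeps_orientation_def .
qed

theorem mainTheorem12:
  shows "Gamma3 relC = {g. positive g \<and> g \<in> Gamma4 relS}
       \<and> Gamma3 relC = {g. positive g \<and> (\<exists>h. initiates g h \<and> rotation_type h)}"
proof -
  have GammaC: "g \<in> Gamma3 relC \<longleftrightarrow> bij g \<and> (\<forall>a b c. cyclic a b c \<longleftrightarrow> cyclic (g a) (g b) (g c))" for g
    unfolding Gamma3_def relC_eq_cyclic by simp
  have GammaS: "g \<in> Gamma4 relS \<longleftrightarrow>
      bij g \<and> (\<forall>a b c d. separated a b c d \<longleftrightarrow> separated (g a) (g b) (g c) (g d))" for g
    unfolding Gamma4_def relS_eq_separated by simp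
  have rotation: "g \<in> Gamma3 relC \<longleftrightarrow> positive g \<and> (\<exists>h. initiates g h \<and> rotation_type h)" for g
    unfolding GammaC
    using cyclic_automorphism_positive_rotation positive_rotation_preserves_cyclic positive_imp_bij
    by blast
  have "g \<in> Gamma3 relC \<longleftrightarrow> positive g \<and> g \<in> Gamma4 relS" for g
    using rotation[of g] unfolding GammaC GammaS
    using positive_separation_preserving_preserves_cyclic
      cyclic_preserving_imp_separation_preserving[OF bij_is_inj]
    by blast
  with rotation show ?thesis
    by blast
qed
end
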